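(* Let $T=(T_a,T_b)$ be a rooted binary tree on $n$ leaves, where $T_a$ and $T_b$ have $n_a$ and $n_b$ leaves respectively. If $n_a\neq n_b$ and both $n_a$ and $n_b$ are odd, then $\mathcal{C}(T)>c_n$, i.e. $T$ does not have minimal Colless index.
   Context: A rooted binary tree with $n\geq 2$ leaves is a rooted tree whose root has degree 2 and all other internal nodes have degree 3; for $n=1$ it is a single node. $T=(T_a,T_b)$ denotes the decomposition into the two subtrees rooted at the children of the root. For an internal node $v$ with children $v_1,v_2$, let $\kappa(v_i)$ be the number of leaves descending from $v_i$ ($1$ if a leaf). The Colless index is $\mathcal{C}(T)=\sum_v|\kappa(v_1)-\kappa(v_2)|$ over internal nodes $v$; $c_n$ is the minimum of $\mathcal{C}$ over rooted binary trees with $n$ leaves. *)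

theory Defs
  imports Main
begin

datatype btree = Leaf | Node btree btree

fun leaves :: "btree \<Rightarrow> nat" where
  "leaves Leaf = 1"
| "leaves (Node ta tb) = leaves ta + leaves tb"

fun colless :: "btree \<Rightarrow> nat" where
  "colless Leaf = 0"
| "colless (Node ta tb) =
     nat \<bar>int (leaves ta) - int (leaves tb)\<bar> + colless ta + colless tb"

definition min_colless :: "nat \<Rightarrow> nat" where
  "min_colless n = (LEAST c. \<exists>t. leaves t = n \<and> colless t = c)"

end

theory Submission
  imports Defs
begin

text \<open>The maximally balanced tree with n leaves, which splits n into its two halves at every
  node, has minimal Colless index; write F n for that index. For a root split n = a + b into
  balanced subtrees the excess F a + F b + |a - b| - F n decomposes into the excesses of the
  splits (ceil(a/2), floor(b/2)) and (floor(a/2), ceil(b/2)) plus an explicit local term, which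
  is nonnegative and, when a and b are distinct odd numbers, equal to 2. Hence such a split is
  never optimal, even with optimal subtrees.\<close>

function balanced_tree :: "nat \<Rightarrow> btree" where
  "balanced_tree n =
     (if n \<le> 1 then Leaf else Node (balanced_tree ((n + 1) div 2)) (balanced_tree (n div 2)))"
  by auto
termination by (relation "measure id") auto

declare balanced_tree.simps [simp del]

lemma leaves_ge_1: "leaves t \<ge> 1"
  by (induction t) auto

lemma leaves_balanced_tree: "n \<ge> 1 \<Longrightarrow> leaves (balanced_tree n) = n"
proof (induction n rule: less_induct)
  case (less n)
  show ?case
  proof (cases "n \<le> 1")
    case True
    then show ?thesis
      using less.prems by (simp add: balanced_tree.simps)
  next
    case False
    then show ?thesis
      using less.IH by (simp add: balanced_tree.simps [of n])
  qed
qed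

definition balanced_colless :: "nat \<Rightarrow> int" where
  "balanced_colless n = int (colless (balanced_tree n))"

lemma balanced_colless_1 [simp]: "balanced_colless (Suc 0) = 0"
  by (simp add: balanced_colless_def balanced_tree.simps)

lemma balanced_colless_rec:
  assumes "n \<ge> 2"
  shows "balanced_colless n =
    balanced_colless ((n + 1) div 2) + balanced_colless (n div 2) + int (n mod 2)"
proof -
  have "balanced_tree n = Node (balanced_tree ((n + 1) div 2)) (balanced_tree (n div 2))"
    using assms by (simp add: balanced_tree.simps [of n])
  moreover have "(n + 1) div 2 = n div 2 + n mod 2"
    by presburger
  ultimately show ?thesis
    using assms by (simp add: balanced_colless_def leaves_balanced_tree)
qed

lemma balanced_colless_Suc_diff:
  assumes "b \<ge> 2"
  shows "balanced_colless (b + 1) - balanced_colless b =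
    balanced_colless (b div 2 + 1) - balanced_colless (b div 2) + 1 - 2 * int (b mod 2)"
proof -
  have "(b + 1 + 1) div 2 = b div 2 + 1" "(b + 1) mod 2 = 1 - b mod 2"
    by presburger+
  then show ?thesis
    using balanced_colless_rec [of b] balanced_colless_rec [of "b + 1"] assms by simp
qed

lemma balanced_colless_Suc_le:
  "b \<ge> 1 \<Longrightarrow> balanced_colless (b + 1) \<le> balanced_colless b + int b - 1"
proof (induction b rule: less_induct)
  case (less b)
  show ?case
  proof (cases "b = 1")
    case True
    then show ?thesis
      by (simp add: balanced_colless_def balanced_tree.simps)
  next
    case False
    then have "b \<ge> 2" "b div 2 \<ge> 1" "b div 2 < b"
      using less.prems by auto
    moreover have "int b = 2 * int (b div 2) + int (b mod 2)"
      using div_mult_mod_eq [of b 2] by linarith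
    ultimately show ?thesis
      using less.IH [of "b div 2"] balanced_colless_Suc_diff [of b] by linarith
  qed
qed

lemma balanced_colless_Suc_less:
  assumes "b \<ge> 3" and "odd b"
  shows "balanced_colless (b + 1) < balanced_colless b + int b - 1"
proof -
  have "int b = 2 * int (b div 2) + int (b mod 2)"
    using div_mult_mod_eq [of b 2] by linarith
  moreover have "b div 2 \<ge> 1" "b mod 2 = 1"
    using assms by (auto simp: odd_iff_mod_2_eq_one)
  ultimately show ?thesis
    using balanced_colless_Suc_le [of "b div 2"] balanced_colless_Suc_diff [of b] assms
    by linarith
qed

definition split_excess :: "nat \<Rightarrow> nat \<Rightarrow> int" where
  "split_excess a b =
     balanced_colless a + balanced_colless b + \<bar>int a - int b\<bar> - balanced_colless (a + b)"

lemma split_excess_commute: "split_excess a b = split_excess b a"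
  by (simp add: split_excess_def add.commute abs_minus_commute)

lemma split_excess_1_left:
  "b \<ge> 1 \<Longrightarrow> split_excess 1 b = balanced_colless b + int b - 1 - balanced_colless (b + 1)"
  by (simp add: split_excess_def add.commute)

lemma split_local_term:
  fixes a b :: nat
  shows "\<bar>int a - int b\<bar> + int (a mod 2) + int (b mod 2) - int ((a + b) mod 2)
      - \<bar>int ((a + 1) div 2) - int (b div 2)\<bar> - \<bar>int (a div 2) - int ((b + 1) div 2)\<bar> =
    (if odd a \<and> odd b \<and> a \<noteq> b then 2 else 0)"
proof -
  obtain p r where a: "a = 2 * p + r" "r < 2"
    by (metis div_mult_mod_eq mod_less_divisor zero_less_numeral mult.commute)
  obtain q s where b: "b = 2 * q + s" "s < 2"
    by (metis div_mult_mod_eq mod_less_divisor zero_less_numeral mult.commute)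
  show ?thesis
    using a b by (cases r; cases s) (auto simp: abs_if)
qed

lemma halves_of_sum:
  fixes a b :: nat
  shows "(a + b + 1) div 2 = (a + 1) div 2 + b div 2 \<and> (a + b) div 2 = a div 2 + (b + 1) div 2 \<or>
    (a + b + 1) div 2 = a div 2 + (b + 1) div 2 \<and> (a + b) div 2 = (a + 1) div 2 + b div 2"
proof -
  obtain p r where a: "a = 2 * p + r" "r < 2"
    by (metis div_mult_mod_eq mod_less_divisor zero_less_numeral mult.commute)
  obtain q s where b: "b = 2 * q + s" "s < 2"
    by (metis div_mult_mod_eq mod_less_divisor zero_less_numeral mult.commute)
  show ?thesis
    using a b by (cases r; cases s) auto
qed

lemma split_excess_halves:
  assumes "a \<ge> 2" and "b \<ge> 2"
  shows "split_excess a b =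
    split_excess ((a + 1) div 2) (b div 2) + split_excess (a div 2) ((b + 1) div 2) +
    (if odd a \<and> odd b \<and> a \<noteq> b then 2 else 0)"
proof -
  define a1 a2 b1 b2 where "a1 = (a + 1) div 2" "a2 = a div 2" "b1 = (b + 1) div 2" "b2 = b div 2"
  have "balanced_colless (a + b) =
      balanced_colless (a1 + b2) + balanced_colless (a2 + b1) + int ((a + b) mod 2)"
    using balanced_colless_rec [of "a + b"] halves_of_sum [of a b] assms
    unfolding a1_a2_b1_b2_def by auto
  moreover have "balanced_colless a = balanced_colless a1 + balanced_colless a2 + int (a mod 2)"
    "balanced_colless b = balanced_colless b1 + balanced_colless b2 + int (b mod 2)"
    using balanced_colless_rec assms unfolding a1_a2_b1_b2_def by auto
  ultimately show ?thesis
    using split_local_term [of a b] unfolding a1_a2_b1_b2_def split_excess_def by linarith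
qed

lemma split_excess_nonneg: "a \<ge> 1 \<Longrightarrow> b \<ge> 1 \<Longrightarrow> split_excess a b \<ge> 0"
proof (induction "a + b" arbitrary: a b rule: less_induct)
  case less
  consider "a = 1" | "b = 1" | "a \<ge> 2" "b \<ge> 2"
    using less.prems by linarith
  then show ?case
  proof cases
    case 1
    then show ?thesis
      using balanced_colless_Suc_le [of b] split_excess_1_left [of b] less.prems by simp
  next
    case 2
    then show ?thesis
      using balanced_colless_Suc_le [of a] split_excess_1_left [of a] less.prems
      by (simp add: split_excess_commute)
  next
    case 3
    then have "split_excess ((a + 1) div 2) (b div 2) \<ge> 0"
      "split_excess (a div 2) ((b + 1) div 2) \<ge> 0"
      by (auto intro!: less.hyps)
    then show ?thesis
      using split_excess_halves [OF 3] by simp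
  qed
qed

lemma split_excess_pos_odd:
  assumes "odd a" and "odd b" and "a \<noteq> b"
  shows "split_excess a b > 0"
proof -
  have "a \<ge> 1" "b \<ge> 1" "a \<noteq> 2" "b \<noteq> 2"
    using assms odd_pos [of a] odd_pos [of b] by auto
  then consider "a = 1" | "b = 1" | "a \<ge> 3" "b \<ge> 3"
    by linarith
  then show ?thesis
  proof cases
    case 1
    with assms have "b \<ge> 3" by presburger
    then show ?thesis
      using balanced_colless_Suc_less [of b] split_excess_1_left [of b] assms 1 by simp
  next
    case 2
    with assms have "a \<ge> 3" by presburger
    then show ?thesis
      using balanced_colless_Suc_less [of a] split_excess_1_left [of a] assms 2
      by (simp add: split_excess_commute)
  next
    case 3
    then have "split_excess ((a + 1) div 2) (b div 2) \<ge> 0"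
      "split_excess (a div 2) ((b + 1) div 2) \<ge> 0"
      by (auto intro!: split_excess_nonneg)
    then show ?thesis
      using split_excess_halves [of a b] 3 assms by simp
  qed
qed

lemma balanced_colless_le_colless: "balanced_colless (leaves t) \<le> int (colless t)"
proof (induction t)
  case Leaf
  then show ?case by simp
next
  case (Node ta tb)
  then show ?case
    using split_excess_nonneg [OF leaves_ge_1 leaves_ge_1, of ta tb]
    by (simp add: split_excess_def)
qed

lemma min_colless_eq_balanced_colless:
  assumes "n \<ge> 1"
  shows "int (min_colless n) = balanced_colless n"
proof -
  have "min_colless n = colless (balanced_tree n)"
    unfolding min_colless_def
  proof (rule Least_equality)
    show "\<exists>t. leaves t = n \<and> colless t = colless (balanced_tree n)"
      using leaves_balanced_tree [OF assms] by blast
  next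
    fix c assume "\<exists>t. leaves t = n \<and> colless t = c"
    then show "colless (balanced_tree n) \<le> c"
      using balanced_colless_le_colless by (fastforce simp: balanced_colless_def)
  qed
  then show ?thesis
    by (simp add: balanced_colless_def)
qed

theorem theorem7:
  fixes ta tb :: btree
  assumes "leaves ta \<noteq> leaves tb"
    and "odd (leaves ta)" and "odd (leaves tb)"
  shows "colless (Node ta tb) > min_colless (leaves (Node ta tb))"
proof -
  let ?a = "leaves ta" and ?b = "leaves tb"
  have "int (min_colless (?a + ?b)) = balanced_colless (?a + ?b)"
    using leaves_ge_1 [of ta] by (simp add: min_colless_eq_balanced_colless)
  also have "\<dots> < balanced_colless ?a + balanced_colless ?b + \<bar>int ?a - int ?b\<bar>"
    using split_excess_pos_odd [OF assms(2,3,1)] by (simp add: split_excess_def)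
  also have "\<dots> \<le> int (colless (Node ta tb))"
    using balanced_colless_le_colless [of ta] balanced_colless_le_colless [of tb] by simp
  finally show ?thesis
    by simp
qed

end
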